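(* Let $k\geq 2$ and define $f(x,y)=(x+y)^{2}x^{2}-\left(x+\frac{y}{2}\right)^{2}(2x+y-2)$. If $k\leq x\leq k+(2k-1)^{2}$ and $0\leq y\leq (2k-1)^{2}$, then $f(x,y)>0$.
   Context: Here $x,y$ are real numbers. *)

theory Defs
  imports Complex_Main
begin

definition f :: "real \<Rightarrow> real \<Rightarrow> real" where
  "f x y = (x + y)^2 * x^2 - (x + y / 2)^2 * (2 * x + y - 2)"

end

theory Submission
  imports Defs
begin

text \<open>As a cubic in \<open>y\<close>, \<open>f x y\<close> has leading term \<open>-y^3/4\<close>. The bound \<open>y \<le> (2x - 1)^2\<close>
  lets \<open>y^2 (2x - 1)^2 / 4\<close> absorb it, and the leftover \<open>-y^2 (2x - 1)/4\<close> is absorbed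
  in turn by \<open>y (2x - 1)^3 / 4\<close>; what remains has positive coefficients for \<open>x \<ge> 2\<close>.\<close>

lemma f_expand_in_y:
  "f x y = x^2 * ((x - 1)^2 + 1) + y * (2*x^3 - 3*x^2 + 2*x)
           + y^2 * (x^2 - 3*x/2 + 1/2) - y^3/4"
  by (simp add: f_def power2_eq_square power3_eq_cube algebra_simps)

lemma f_pos_if_y_le_sq:
  fixes x y :: real
  assumes x: "x \<ge> 2" and y0: "0 \<le> y" and y_le: "y \<le> (2*x - 1)^2"
  shows "f x y > 0"
proof -
  have cube_le: "y^3 \<le> y^2 * (2*x - 1)^2"
    using mult_left_mono[OF y_le, of "y^2"] by (simp add: power3_eq_cube power2_eq_square)
  have sq_le: "y^2 * (2*x - 1) \<le> y * (2*x - 1)^2 * (2*x - 1)"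
    using mult_right_mono[OF mult_left_mono[OF y_le y0], of "2*x - 1"] x
    by (simp add: power2_eq_square mult.assoc)
  have "f x y \<ge> x^2 * ((x - 1)^2 + 1) + y * (x/2 + 1/4)"
    using cube_le sq_le unfolding f_expand_in_y
    by (simp add: power2_eq_square power3_eq_cube algebra_simps)
  moreover have "x^2 * ((x - 1)^2 + 1) > 0"
    using x by (intro mult_pos_pos) (auto intro: add_nonneg_pos)
  moreover have "y * (x/2 + 1/4) \<ge> 0"
    using y0 x by simp
  ultimately show ?thesis by linarith
qed

theorem lemma3p3:
  fixes k :: nat and x y :: real
  assumes "k \<ge> 2"
    and "real k \<le> x" and "x \<le> real k + (2 * real k - 1)^2"
    and "0 \<le> y" and "y \<le> (2 * real k - 1)^2"
  shows "f x y > 0"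
proof (rule f_pos_if_y_le_sq)
  have k: "real k \<ge> 2" using assms(1) by simp
  then show "x \<ge> 2" using assms(2) by linarith
  show "0 \<le> y" by fact
  have "(2 * real k - 1)^2 \<le> (2*x - 1)^2" using k assms(2) by (intro power_mono) auto
  then show "y \<le> (2*x - 1)^2" using assms(5) by linarith
qed

end
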